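(* Let $p\in\mathcal P$ and assume that both $\Gamma_{\mu(p)}(p)$ and $\Gamma_{\mu(p^r)}(p^r)$ admit an acyclic connected component. Then: (i) $\mu(p)=\mu(p^r)$; (ii) if $\Gamma_{\mu(p)}(p)$ is connected, then $D_{\mu(p)}(p)\cap D_{\mu(p^r)}(p^r)=\varnothing$; (iii) if $\Gamma_{\mu(p)}(p)$ is acyclic, then there is no $x\in N$ with $D_{\mu(p)}(p)=D_{\mu(p^r)}(p^r)=\{x\}$.
   Context: Let $n,h\ge2$, $N=\{1,\dots,n\}$, $H=\{1,\dots,h\}$, $\mathcal P$ the set of $h$-tuples of linear orders on $N$, $p^r$ the profile obtained by reversing each order; $x>_{p_i}y$ means $x\neq y$ and $p_i$ ranks $x$ above $y$; for an integer $\mu\in(h/2,h]$, $x>^p_\mu y$ means $|\{i: x>_{p_i}y\}|\ge\mu$; $D_\mu(p)=\{x\in N: \forall y,\ |\{i: y>_{p_i}x\}|<\mu\}$; $\mu(p)=\min\{\mu\in\mathbb N\cap(h/2,h]: D_\mu(p)\ne\varnothing\}$. $\Gamma_\mu(p)$ is the directed graph $(N,\{(x,y): x>^p_\mu y\})$. Connected components are those of the underlying undirected graph; a directed graph is acyclic if it contains no directed cycle (on $l\ge2$ distinct vertices) as a subgraph. *)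

theory Defs
  imports Main
begin

text \<open>A linear order on N = {1..n} is represented as a relation r with linear_order_on {1..n} r;
  (x,y) \<in> r means that x is ranked weakly above y. A profile is p :: nat \<Rightarrow> nat rel,
  with p i the order of voter i \<in> H = {1..h} (values outside H are irrelevant).\<close>

definition is_profile :: "nat \<Rightarrow> nat \<Rightarrow> (nat \<Rightarrow> nat rel) \<Rightarrow> bool" where
  "is_profile n h p \<longleftrightarrow> (\<forall>i\<in>{1..h}. linear_order_on {1..n} (p i))"

definition rev_profile :: "(nat \<Rightarrow> nat rel) \<Rightarrow> (nat \<Rightarrow> nat rel)" where
  "rev_profile p = (\<lambda>i. (p i)\<inverse>)"

definition spref :: "nat rel \<Rightarrow> nat \<Rightarrow> nat \<Rightarrow> bool" where
  "spref r x y \<longleftrightarrow> x \<noteq> y \<and> (x, y) \<in> r"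

definition cnt :: "nat \<Rightarrow> (nat \<Rightarrow> nat rel) \<Rightarrow> nat \<Rightarrow> nat \<Rightarrow> nat" where
  "cnt h p x y = card {i \<in> {1..h}. spref (p i) x y}"

definition Dmu :: "nat \<Rightarrow> nat \<Rightarrow> (nat \<Rightarrow> nat rel) \<Rightarrow> nat \<Rightarrow> nat set" where
  "Dmu n h p mu = {x \<in> {1..n}. \<forall>y\<in>{1..n}. cnt h p y x < mu}"

definition mu_of :: "nat \<Rightarrow> nat \<Rightarrow> (nat \<Rightarrow> nat rel) \<Rightarrow> nat" where
  "mu_of n h p = (LEAST mu. h < 2 * mu \<and> mu \<le> h \<and> Dmu n h p mu \<noteq> {})"

definition Gamma :: "nat \<Rightarrow> nat \<Rightarrow> (nat \<Rightarrow> nat rel) \<Rightarrow> nat \<Rightarrow> nat rel" where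
  "Gamma n h p mu = {(x, y). x \<in> {1..n} \<and> y \<in> {1..n} \<and> mu \<le> cnt h p x y}"

definition components :: "nat set \<Rightarrow> nat rel \<Rightarrow> nat set set" where
  "components V E = V // ((E \<union> E\<inverse>)\<^sup>*)"

definition is_connected :: "nat set \<Rightarrow> nat rel \<Rightarrow> bool" where
  "is_connected V E \<longleftrightarrow> (\<forall>x\<in>V. \<forall>y\<in>V. (x, y) \<in> (E \<union> E\<inverse>)\<^sup>*)"

definition has_acyclic_component :: "nat set \<Rightarrow> nat rel \<Rightarrow> bool" where
  "has_acyclic_component V E \<longleftrightarrow> (\<exists>C \<in> components V E. acyclic (E \<inter> (C \<times> C)))"

end

theory Submission
  imports Defs
begin

text \<open>Since \<open>\<Gamma>\<^sub>\<mu>(p\<^sup>r)\<close> is the reverse of \<open>\<Gamma>\<^sub>\<mu>(p)\<close>, the set \<open>D\<^sub>\<mu>(p)\<close> consists of the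
  sources of \<open>\<Gamma>\<^sub>\<mu>(p)\<close> and \<open>D\<^sub>\<mu>(p\<^sup>r)\<close> of its sinks. A finite acyclic component has a source
  and a sink, so an acyclic component of \<open>\<Gamma>\<^sub>\<mu>\<^sub>(\<^sub>p\<^sub>)(p)\<close> makes \<open>D\<^sub>\<mu>\<^sub>(\<^sub>p\<^sub>)(p\<^sup>r)\<close> nonempty,
  i.e. \<open>\<mu>(p\<^sup>r) \<le> \<mu>(p)\<close>; by symmetry the two thresholds agree. A vertex lying in both sets is
  isolated, which a connected graph on at least two vertices does not allow. Finally, if
  \<open>x\<close> is a sink of an acyclic graph, the vertices other than \<open>x\<close> contain a minimal one,
  which is a second source.\<close>

definition sources :: "nat set \<Rightarrow> nat rel \<Rightarrow> nat set" where
  "sources V E = {x \<in> V. \<forall>y. (y, x) \<notin> E}"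

lemma components_converse: "components V (E\<inverse>) = components V E"
  unfolding components_def by (simp add: Un_commute)

lemma has_acyclic_component_converse:
  "has_acyclic_component V (E\<inverse>) \<longleftrightarrow> has_acyclic_component V E"
proof -
  have "E\<inverse> \<inter> (C \<times> C) = (E \<inter> (C \<times> C))\<inverse>" for C by auto
  then show ?thesis
    unfolding has_acyclic_component_def components_converse by (simp add: acyclic_converse)
qed

lemma components_cases:
  assumes "C \<in> components V E"
  obtains x where "x \<in> V" "x \<in> C" "C = (E \<union> E\<inverse>)\<^sup>* `` {x}"
  using assms unfolding components_def by (auto elim!: quotientE)

lemma components_subset:
  assumes "E \<subseteq> V \<times> V" and "C \<in> components V E"
  shows "C \<subseteq> V"
proof -
  obtain x where "x \<in> V" and C: "C = (E \<union> E\<inverse>)\<^sup>* `` {x}"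
    using assms(2) by (rule components_cases)
  moreover have "(E \<union> E\<inverse>)\<^sup>* `` V = V"
    using assms(1) by (intro Image_closed_trancl) auto
  ultimately show ?thesis by auto
qed

lemma components_closed:
  assumes "C \<in> components V E" and "z \<in> C" and "(y, z) \<in> E"
  shows "y \<in> C"
proof -
  obtain x where C: "C = (E \<union> E\<inverse>)\<^sup>* `` {x}"
    using assms(1) by (rule components_cases)
  with assms(2,3) have "(x, y) \<in> (E \<union> E\<inverse>)\<^sup>*"
    by (auto intro: rtrancl_into_rtrancl)
  with C show ?thesis by auto
qed

lemma acyclic_component_sources_nonempty:
  assumes "finite V" and "E \<subseteq> V \<times> V" and "has_acyclic_component V E"
  shows "sources V E \<noteq> {}"
proof -
  obtain C where C: "C \<in> components V E" and acyc: "acyclic (E \<inter> (C \<times> C))"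
    using assms(3) unfolding has_acyclic_component_def by blast
  obtain x where "x \<in> C" using C by (rule components_cases)
  have "finite E" using assms(1,2) finite_subset by blast
  then have "wf (E \<inter> (C \<times> C))" using acyc by (intro finite_acyclic_wf) auto
  then obtain z where "z \<in> C" and zmin: "\<And>y. (y, z) \<in> E \<inter> (C \<times> C) \<Longrightarrow> y \<notin> C"
    using \<open>x \<in> C\<close> by (rule wfE_min) blast
  have "(y, z) \<notin> E" for y
    using zmin components_closed[OF C \<open>z \<in> C\<close>] \<open>z \<in> C\<close> by blast
  moreover have "z \<in> V" using components_subset[OF assms(2) C] \<open>z \<in> C\<close> by blast
  ultimately show ?thesis unfolding sources_def by blast
qed

lemma connected_sources_sinks_disjoint:
  assumes "is_connected V E" and "\<And>x. V \<noteq> {x}"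
  shows "sources V E \<inter> sources V (E\<inverse>) = {}"
proof (rule ccontr)
  assume "sources V E \<inter> sources V (E\<inverse>) \<noteq> {}"
  then obtain x where "x \<in> V" and isolated: "\<And>z. (x, z) \<notin> E \<union> E\<inverse>"
    unfolding sources_def by auto
  then obtain y where "y \<in> V" and "x \<noteq> y" using assms(2) by blast
  then have "(x, y) \<in> (E \<union> E\<inverse>)\<^sup>*" using assms(1) \<open>x \<in> V\<close> unfolding is_connected_def by blast
  then show False
    using \<open>x \<noteq> y\<close> isolated by (cases rule: converse_rtranclE) auto
qed

lemma acyclic_unique_source_sink:
  assumes "finite V" and "E \<subseteq> V \<times> V" and "acyclic E"
    and "sources V E = {x}" and "sources V (E\<inverse>) = {x}"
  shows "V = {x}"
proof (rule ccontr)
  assume "V \<noteq> {x}"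
  then obtain y where "y \<in> V - {x}" using assms(4) unfolding sources_def by blast
  have "finite E" using assms(1,2) finite_subset by blast
  then have "wf E" using assms(3) by (rule finite_acyclic_wf)
  then obtain z where z: "z \<in> V - {x}" and zmin: "\<And>w. (w, z) \<in> E \<Longrightarrow> w \<notin> V - {x}"
    using \<open>y \<in> V - {x}\<close> by (rule wfE_min) blast
  have "(x, w) \<notin> E" for w using assms(5) unfolding sources_def by blast
  with zmin assms(2) have "(w, z) \<notin> E" for w by blast
  with z have "z \<in> sources V E" unfolding sources_def by blast
  with z assms(4) show False by blast
qed

lemma linear_order_on_has_top:
  assumes "finite A" and "A \<noteq> {}" and "linear_order_on A r"
  obtains z where "z \<in> A" and "\<And>y. (y, z) \<in> r \<Longrightarrow> y = z"
proof -
  have "r \<subseteq> A \<times> A" using assms(3) unfolding order_on_defs by blast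
  then have "finite r" using assms(1) finite_subset by blast
  then have "wf (r - Id)"
    using assms(3) linear_order_on_well_order_on unfolding well_order_on_def by blast
  then obtain z where "z \<in> A" and "\<And>y. (y, z) \<in> r - Id \<Longrightarrow> y \<notin> A"
    using assms(2) by (rule wfE_min') blast
  with \<open>r \<subseteq> A \<times> A\<close> show thesis by (intro that) auto
qed

lemma cnt_rev_profile: "cnt h (rev_profile p) x y = cnt h p y x"
  unfolding cnt_def rev_profile_def spref_def by (rule arg_cong[where f = card]) auto

lemma Gamma_rev_profile: "Gamma n h (rev_profile p) m = (Gamma n h p m)\<inverse>"
  unfolding Gamma_def by (auto simp: cnt_rev_profile)

lemma rev_profile_rev_profile [simp]: "rev_profile (rev_profile p) = p"
  unfolding rev_profile_def by simp

lemma is_profile_rev_profile: "is_profile n h p \<Longrightarrow> is_profile n h (rev_profile p)"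
  unfolding is_profile_def rev_profile_def by simp

lemma Gamma_subset: "Gamma n h p m \<subseteq> {1..n} \<times> {1..n}"
  unfolding Gamma_def by auto

lemma Dmu_eq_sources: "Dmu n h p m = sources {1..n} (Gamma n h p m)"
proof -
  have "(\<forall>y\<in>{1..n}. cnt h p y x < m) \<longleftrightarrow> (\<forall>y. (y, x) \<notin> Gamma n h p m)" if "x \<in> {1..n}" for x
    using that unfolding Gamma_def by (auto simp: not_le simp del: atLeastAtMost_iff)
  then show ?thesis unfolding Dmu_def sources_def by blast
qed

lemma Dmu_unanimity_nonempty:
  assumes "is_profile n h p" and "1 \<le> n" and "1 \<le> h"
  shows "Dmu n h p h \<noteq> {}"
proof -
  obtain z where z: "z \<in> {1..n}" and top: "\<And>y. (y, z) \<in> p 1 \<Longrightarrow> y = z"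
    using linear_order_on_has_top[of "{1..n}" "p 1"] assms unfolding is_profile_def by auto
  have "cnt h p y z < h" for y
  proof -
    have "{i \<in> {1..h}. spref (p i) y z} \<subseteq> {1..h} - {1}"
      using top unfolding spref_def by auto
    then have "cnt h p y z \<le> card ({1..h} - {1::nat})"
      unfolding cnt_def by (intro card_mono) auto
    also have "\<dots> < h" using assms(3) by simp
    finally show ?thesis .
  qed
  with z show ?thesis unfolding Dmu_def by blast
qed

lemma mu_of_spec:
  assumes "is_profile n h p" and "1 \<le> n" and "1 \<le> h"
  shows "h < 2 * mu_of n h p \<and> mu_of n h p \<le> h \<and> Dmu n h p (mu_of n h p) \<noteq> {}"
  unfolding mu_of_def
  by (rule LeastI[of _ h]) (use assms Dmu_unanimity_nonempty in auto)

lemma mu_of_le: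
  "h < 2 * m \<Longrightarrow> m \<le> h \<Longrightarrow> Dmu n h p m \<noteq> {} \<Longrightarrow> mu_of n h p \<le> m"
  unfolding mu_of_def by (rule Least_le) simp

lemma mu_of_rev_profile_le:
  assumes "is_profile n h p" and "1 \<le> n" and "1 \<le> h"
    and "has_acyclic_component {1..n} (Gamma n h p (mu_of n h p))"
  shows "mu_of n h (rev_profile p) \<le> mu_of n h p"
proof -
  let ?m = "mu_of n h p"
  have "Dmu n h (rev_profile p) ?m \<noteq> {}"
    unfolding Dmu_eq_sources Gamma_rev_profile
    using assms(4) Gamma_subset[of n h p ?m]
    by (intro acyclic_component_sources_nonempty) (auto simp: has_acyclic_component_converse)
  then show ?thesis
    using mu_of_spec[OF assms(1-3)] mu_of_le[of h ?m n "rev_profile p"] by blast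
qed

theorem lemma6:
  fixes n h :: nat and p :: "nat \<Rightarrow> nat rel"
  assumes "n \<ge> 2" and "h \<ge> 2"
    and "is_profile n h p"
    and "has_acyclic_component {1..n} (Gamma n h p (mu_of n h p))"
    and "has_acyclic_component {1..n}
           (Gamma n h (rev_profile p) (mu_of n h (rev_profile p)))"
  shows "mu_of n h p = mu_of n h (rev_profile p)
    \<and> (is_connected {1..n} (Gamma n h p (mu_of n h p)) \<longrightarrow>
           Dmu n h p (mu_of n h p) \<inter> Dmu n h (rev_profile p) (mu_of n h (rev_profile p)) = {})
    \<and> (acyclic (Gamma n h p (mu_of n h p)) \<longrightarrow>
           \<not> (\<exists>x\<in>{1..n}. Dmu n h p (mu_of n h p) = {x} \<and>
                          Dmu n h (rev_profile p) (mu_of n h (rev_profile p)) = {x}))"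
proof -
  have mu_eq: "mu_of n h p = mu_of n h (rev_profile p)"
    using mu_of_rev_profile_le[OF assms(3) _ _ assms(4)]
      mu_of_rev_profile_le[OF is_profile_rev_profile[OF assms(3)] _ _ assms(5)] assms(1,2)
    by simp
  define G where "G = Gamma n h p (mu_of n h p)"
  have D: "Dmu n h p (mu_of n h p) = sources {1..n} G"
    and D_rev: "Dmu n h (rev_profile p) (mu_of n h (rev_profile p)) = sources {1..n} (G\<inverse>)"
    unfolding G_def mu_eq Dmu_eq_sources Gamma_rev_profile by simp_all
  have "1 \<in> {1..n}" and "2 \<in> {1..n}" using assms(1) by auto
  then have not_singleton: "{1..n} \<noteq> {x}" for x :: nat by (metis Suc_1 n_not_Suc_n singletonD)
  have G_subset: "G \<subseteq> {1..n} \<times> {1..n}" unfolding G_def by (rule Gamma_subset)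
  have disjoint: "is_connected {1..n} G \<longrightarrow> sources {1..n} G \<inter> sources {1..n} (G\<inverse>) = {}"
    using connected_sources_sinks_disjoint[OF _ not_singleton] by blast
  have no_common_singleton:
    "acyclic G \<longrightarrow> \<not> (\<exists>x\<in>{1..n}. sources {1..n} G = {x} \<and> sources {1..n} (G\<inverse>) = {x})"
  proof (intro impI notI)
    assume "acyclic G" and "\<exists>x\<in>{1..n}. sources {1..n} G = {x} \<and> sources {1..n} (G\<inverse>) = {x}"
    then obtain x where "sources {1..n} G = {x}" and "sources {1..n} (G\<inverse>) = {x}" by blast
    then have "{1..n} = {x}"
      using acyclic_unique_source_sink[OF finite_atLeastAtMost G_subset \<open>acyclic G\<close>] by blast
    with not_singleton show False by blast
  qed
  show ?thesis
    unfolding D D_rev G_def[symmetric] by (intro conjI mu_eq disjoint no_common_singleton)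
qed

end
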